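(* Let A be a rate and window assignment algorithm for the multi-rate fluid model which, for any task system $\tau$ and number of processors $m$, is guaranteed to return some assignment satisfying (S1)–(S5) whenever there exists at least one assignment such that $\theta_{i,j}^H=\theta_i^H$ for all $\tau_i\in\tau_H$ and all $1\le j\le n_H$, $w_j=0$ for all $1\le j\le n_H$, and (S1)–(S5) hold. Then A dominates MC-Fluid (every task system schedulable under MC-Fluid on $m$ processors is schedulable under A on $m$ processors), and A has a speed-up bound of $4/3$.
   Context: Dual-criticality implicit-deadline sporadic task system $\tau$ on $m$ identical processors; each task $\tau_i$ has period/deadline $T_i>0$, criticality in $\{LO,HI\}$, WCETs $C_i^L\le C_i^H$ ($=$ for LO-tasks), $u_i^L=C_i^L/T_i\le1$, $u_i^H=C_i^H/T_i\le1$; $\tau_H$ the HI-tasks, $n_H=|\tau_H|$. A multi-rate assignment consists of LO-mode rates $\theta_i^L\in(0,1]$ ($\tau_i\in\tau$), transition rates $\theta_{i,j}^H\in[0,1]$ and HI rates $\theta_i^H\in(0,1]$ ($\tau_i\in\tau_H$, $1\le j\le n_H$), and window durations $w_j\ge0$. The earliest completion window of $\tau_i\in\tau_H$ is the largest $k_i\in\{1,\dots,n_H+1\}$ with $\sum_{j<k_i}w_j<T_i-C_i^L/\theta_i^L$; $R_i=\theta_{i,k_i}^H$ if $k_i\le n_H$, else $\theta_i^H$; $\theta_{i,n_H+1}^H:=\theta_i^H$. Conditions: (S1) $\theta_i^L\ge u_i^L$ for all $\tau_i\in\tau$; (S2) $\sum_{\tau}\theta_i^L\le m$; (S3) $\sum_{\tau_H}\theta_{i,j}^H\le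 m$ for all $j$ and $\sum_{\tau_H}\theta_i^H\le m$; (S4) for all $\tau_i\in\tau_H$: $\sum_{j<k_i}\theta_{i,j}^Hw_j+R_i(T_i-C_i^L/\theta_i^L-\sum_{j<k_i}w_j)\ge C_i^H-C_i^L$, $\theta_i^L\le\theta_{i,j}^H$ for $k_i\le j\le n_H$, $\theta_i^L\le\theta_i^H$; (S5) for all $\tau_i\in\tau_H$: $\sum_{j<k_i}\theta_{i,j}^Hw_j\ge u_i^H\sum_{j<k_i}w_j$, $\theta_{i,j}^H\le\theta_{i,j+1}^H$ for $1\le j<k_i$, $\theta_{i,j}^H\ge u_i^H$ for $k_i\le j\le n_H$, $\theta_i^H\ge u_i^H$. A task system is schedulable under A if A returns an assignment satisfying (S1)–(S5). MC-Fluid is the dual-rate fluid rate-assignment algorithm of Lee et al.; a task system is schedulable under MC-Fluid exactly when MC-Fluid returns rates $\theta_i^L$ ($\tau_i\in\tau$), $\theta_i^H$ ($\tau_i\in\tau_H$) satisfying: $\theta_i^L\ge u_i^L$ for all $\tau_i\in\tau$; $u_i^L/\theta_i^L+(u_i^H-u_i^L)/\theta_i^H\le1$ and $\theta_i^H\ge\theta_i^L$ for all $\tau_i\in\tau_H$; $\sum_{\tau}\theta_i^L\le m$; $\sum_{\tau_H}\theta_i^H\le m$. It is known from prior work that MC-Fluid has speed-up bound $4/3$. An algorithm has speed-up bound $s$ if every task system that is MC-schedulable by some algorithm on $m$ unit-speed processors (every job receives $C_i^L$ by its deadline in LO-mode and every HI-job receives $C_i^H$ by its deadline in HI-mode) is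 deemed schedulable by the algorithm on $m$ processors of speed $s$. *)

theory Defs
  imports Complex_Main
begin

record task =
  per :: real        (* period = deadline T_i *)
  CL  :: real
  CH  :: real
  hi  :: bool        (* criticality: True = HI, False = LO *)

type_synonym taskset = "task list"

definition uL :: "task \<Rightarrow> real" where "uL t = CL t / per t"
definition uH :: "task \<Rightarrow> real" where "uH t = CH t / per t"

definition wf_task :: "task \<Rightarrow> bool" where
  "wf_task t \<longleftrightarrow> per t > 0 \<and> 0 \<le> CL t \<and> CL t \<le> CH t \<and> (\<not> hi t \<longrightarrow> CH t = CL t)
      \<and> uL t \<le> 1 \<and> uH t \<le> 1"

definition wf_taskset :: "taskset \<Rightarrow> bool" where
  "wf_taskset ts \<longleftrightarrow> (\<forall>t\<in>set ts. wf_task t)"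

definition Tall :: "taskset \<Rightarrow> nat set" where "Tall ts = {i. i < length ts}"
definition THI :: "taskset \<Rightarrow> nat set" where "THI ts = {i. i < length ts \<and> hi (ts ! i)}"
definition nH :: "taskset \<Rightarrow> nat" where "nH ts = card (THI ts)"

record mr_assign =
  thL  :: "nat \<Rightarrow> real"
  thHj :: "nat \<Rightarrow> nat \<Rightarrow> real"    (* theta_{i,j}^H, 1 <= j <= n_H *)
  thH  :: "nat \<Rightarrow> real"
  win  :: "nat \<Rightarrow> real"            (* w_j, 1 <= j <= n_H *)

(* theta_{i,j}^H with the convention theta_{i,n_H+1}^H := theta_i^H *)
definition thHx :: "taskset \<Rightarrow> mr_assign \<Rightarrow> nat \<Rightarrow> nat \<Rightarrow> real" where
  "thHx ts a i j = (if j = nH ts + 1 then thH a i else thHj a i j)"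

definition slackL :: "taskset \<Rightarrow> mr_assign \<Rightarrow> nat \<Rightarrow> real" where
  "slackL ts a i = per (ts ! i) - CL (ts ! i) / thL a i"

(* earliest completion window k_i: largest k in {1..n_H+1} with sum_{j<k} w_j < T_i - C_i^L/theta_i^L
   (default 1 if no such k exists) *)
definition kcand :: "taskset \<Rightarrow> mr_assign \<Rightarrow> nat \<Rightarrow> nat \<Rightarrow> bool" where
  "kcand ts a i k \<longleftrightarrow> k \<in> {1..nH ts + 1} \<and> (\<Sum>j\<in>{1..<k}. win a j) < slackL ts a i"

definition kidx :: "taskset \<Rightarrow> mr_assign \<Rightarrow> nat \<Rightarrow> nat" where
  "kidx ts a i = (if \<exists>k. kcand ts a i k then (GREATEST k. kcand ts a i k) else 1)"

definition Rrate :: "taskset \<Rightarrow> mr_assign \<Rightarrow> nat \<Rightarrow> real" where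
  "Rrate ts a i = thHx ts a i (kidx ts a i)"

definition mr_domain :: "taskset \<Rightarrow> mr_assign \<Rightarrow> bool" where
  "mr_domain ts a \<longleftrightarrow>
     (\<forall>i\<in>Tall ts. 0 < thL a i \<and> thL a i \<le> 1) \<and>
     (\<forall>i\<in>THI ts. (\<forall>j\<in>{1..nH ts}. 0 \<le> thHj a i j \<and> thHj a i j \<le> 1)
                  \<and> 0 < thH a i \<and> thH a i \<le> 1) \<and>
     (\<forall>j\<in>{1..nH ts}. 0 \<le> win a j)"

definition S1 :: "taskset \<Rightarrow> mr_assign \<Rightarrow> bool" where
  "S1 ts a \<longleftrightarrow> (\<forall>i\<in>Tall ts. thL a i \<ge> uL (ts ! i))"

definition S2 :: "taskset \<Rightarrow> nat \<Rightarrow> mr_assign \<Rightarrow> bool" where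
  "S2 ts m a \<longleftrightarrow> (\<Sum>i\<in>Tall ts. thL a i) \<le> real m"

definition S3 :: "taskset \<Rightarrow> nat \<Rightarrow> mr_assign \<Rightarrow> bool" where
  "S3 ts m a \<longleftrightarrow> (\<forall>j\<in>{1..nH ts}. (\<Sum>i\<in>THI ts. thHj a i j) \<le> real m)
                  \<and> (\<Sum>i\<in>THI ts. thH a i) \<le> real m"

definition S4 :: "taskset \<Rightarrow> mr_assign \<Rightarrow> bool" where
  "S4 ts a \<longleftrightarrow> (\<forall>i\<in>THI ts.
     (let k = kidx ts a i in
       (\<Sum>j\<in>{1..<k}. thHj a i j * win a j)
         + Rrate ts a i * (slackL ts a i - (\<Sum>j\<in>{1..<k}. win a j))
         \<ge> CH (ts ! i) - CL (ts ! i)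
       \<and> (\<forall>j\<in>{k..nH ts}. thL a i \<le> thHj a i j)
       \<and> thL a i \<le> thH a i))"

definition S5 :: "taskset \<Rightarrow> mr_assign \<Rightarrow> bool" where
  "S5 ts a \<longleftrightarrow> (\<forall>i\<in>THI ts.
     (let k = kidx ts a i in
       (\<Sum>j\<in>{1..<k}. thHj a i j * win a j) \<ge> uH (ts ! i) * (\<Sum>j\<in>{1..<k}. win a j)
       \<and> (\<forall>j\<in>{1..<k}. thHx ts a i j \<le> thHx ts a i (j + 1))
       \<and> (\<forall>j\<in>{k..nH ts}. thHj a i j \<ge> uH (ts ! i))
       \<and> thH a i \<ge> uH (ts ! i)))"

definition mr_valid :: "taskset \<Rightarrow> nat \<Rightarrow> mr_assign \<Rightarrow> bool" where
  "mr_valid ts m a \<longleftrightarrow> mr_domain ts a \<and> S1 ts a \<and> S2 ts m a \<and> S3 ts m a \<and> S4 ts a \<and> S5 ts a"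

definition dual_rate_form :: "taskset \<Rightarrow> mr_assign \<Rightarrow> bool" where
  "dual_rate_form ts a \<longleftrightarrow>
     (\<forall>i\<in>THI ts. \<forall>j\<in>{1..nH ts}. thHj a i j = thH a i) \<and> (\<forall>j\<in>{1..nH ts}. win a j = 0)"

type_synonym mr_algorithm = "taskset \<Rightarrow> nat \<Rightarrow> mr_assign option"

definition mr_sched :: "mr_algorithm \<Rightarrow> taskset \<Rightarrow> nat \<Rightarrow> bool" where
  "mr_sched A ts m \<longleftrightarrow> (\<exists>a. A ts m = Some a \<and> mr_valid ts m a)"

(* MC-Fluid returns LO rates and HI rates *)
type_synonym fluid_algorithm = "taskset \<Rightarrow> nat \<Rightarrow> ((nat \<Rightarrow> real) \<times> (nat \<Rightarrow> real)) option"

definition mcf_valid :: "taskset \<Rightarrow> nat \<Rightarrow> (nat \<Rightarrow> real) \<Rightarrow> (nat \<Rightarrow> real) \<Rightarrow> bool" where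
  "mcf_valid ts m rL rH \<longleftrightarrow>
     (\<forall>i\<in>Tall ts. 0 < rL i \<and> rL i \<le> 1 \<and> rL i \<ge> uL (ts ! i)) \<and>
     (\<forall>i\<in>THI ts. 0 < rH i \<and> rH i \<le> 1
        \<and> uL (ts ! i) / rL i + (uH (ts ! i) - uL (ts ! i)) / rH i \<le> 1
        \<and> rH i \<ge> rL i) \<and>
     (\<Sum>i\<in>Tall ts. rL i) \<le> real m \<and>
     (\<Sum>i\<in>THI ts. rH i) \<le> real m"

definition mcf_sched :: "fluid_algorithm \<Rightarrow> taskset \<Rightarrow> nat \<Rightarrow> bool" where
  "mcf_sched F ts m \<longleftrightarrow> (\<exists>rL rH. F ts m = Some (rL, rH) \<and> mcf_valid ts m rL rH)"

(* running on processors of speed s = scaling all WCETs by 1/s *)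
definition scale :: "real \<Rightarrow> taskset \<Rightarrow> taskset" where
  "scale s ts = map (\<lambda>t. t\<lparr>CL := CL t / s, CH := CH t / s\<rparr>) ts"

(* sched has speed-up bound s w.r.t. the MC-feasibility notion Feas
   (Feas ts m: ts is MC-schedulable by some algorithm on m unit-speed processors) *)
definition speedup_bound :: "(taskset \<Rightarrow> nat \<Rightarrow> bool) \<Rightarrow> (taskset \<Rightarrow> nat \<Rightarrow> bool) \<Rightarrow> real \<Rightarrow> bool" where
  "speedup_bound Feas sched s \<longleftrightarrow>
     (\<forall>ts m. wf_taskset ts \<longrightarrow> Feas ts m \<longrightarrow> sched (scale s ts) m)"

end

theory Submission
  imports Defs
begin

text \<open>An MC-Fluid rate pair \<open>(\<theta>\<^sup>L, \<theta>\<^sup>H)\<close> is a multi-rate assignment of dual-rate form: keep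
  \<open>\<theta>\<^sup>H\<close> in every transition window and give all windows length zero. Then \<open>R\<^sub>i = \<theta>\<^sub>i\<^sup>H\<close>
  whatever \<open>k\<^sub>i\<close> is, and (S4), (S5) reduce to the MC-Fluid conditions, so an algorithm that is
  optimal among dual-rate assignments dominates MC-Fluid. As the scaled task systems stay
  well formed, it inherits the speed-up bound \<open>4/3\<close> of MC-Fluid.\<close>

lemma fluid_HI_budget:
  fixes T cl ch rl rh :: real
  assumes "0 < T" "0 < rl" "0 < rh"
    and "(cl / T) / rl + (ch / T - cl / T) / rh \<le> 1"
  shows "ch - cl \<le> rh * (T - cl / rl)"
proof -
  have "cl / rl + (ch - cl) / rh \<le> T"
    using assms by (simp add: field_simps)
  then have "(ch - cl) / rh \<le> T - cl / rl" by linarith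
  then show ?thesis using \<open>0 < rh\<close> by (simp add: pos_divide_le_eq mult.commute)
qed

lemma fluid_HI_rate_ge_util:
  fixes ul uh rl rh :: real
  assumes "0 \<le> ul" "0 < rl" "rl \<le> rh"
    and "ul / rl + (uh - ul) / rh \<le> 1"
  shows "uh \<le> rh"
proof -
  have "ul / rh \<le> ul / rl"
    using assms(1-3) by (simp add: divide_left_mono)
  then have "uh / rh \<le> 1"
    using assms(4) by (simp add: diff_divide_distrib)
  then show ?thesis using assms(2,3) by (simp add: divide_le_eq)
qed

definition dual_rate_assign :: "(nat \<Rightarrow> real) \<Rightarrow> (nat \<Rightarrow> real) \<Rightarrow> mr_assign" where
  "dual_rate_assign rL rH = \<lparr>thL = rL, thHj = (\<lambda>i j. rH i), thH = rH, win = (\<lambda>j. 0)\<rparr>"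

lemma dual_rate_assign_simps [simp]:
  "thL (dual_rate_assign rL rH) = rL"
  "thHj (dual_rate_assign rL rH) i j = rH i"
  "thH (dual_rate_assign rL rH) = rH"
  "win (dual_rate_assign rL rH) j = 0"
  "thHx ts (dual_rate_assign rL rH) i j = rH i"
  "Rrate ts (dual_rate_assign rL rH) i = rH i"
  by (simp_all add: dual_rate_assign_def thHx_def Rrate_def)

lemma dual_rate_form_dual_rate_assign: "dual_rate_form ts (dual_rate_assign rL rH)"
  by (simp add: dual_rate_form_def)

lemma mr_valid_dual_rate_assign:
  assumes wf: "wf_taskset ts" and valid: "mcf_valid ts m rL rH"
  shows "mr_valid ts m (dual_rate_assign rL rH)"
proof -
  let ?a = "dual_rate_assign rL rH"
  have HI_task: "CH (ts ! i) - CL (ts ! i) \<le> rH i * slackL ts ?a i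
      \<and> rL i \<le> rH i \<and> uH (ts ! i) \<le> rH i" if "i \<in> THI ts" for i
  proof -
    from that wf have "wf_task (ts ! i)"
      by (auto simp: THI_def wf_taskset_def)
    then have "0 < per (ts ! i)" "0 \<le> uL (ts ! i)"
      by (simp_all add: wf_task_def uL_def)
    moreover from that valid have "0 < rL i" "0 < rH i" "rL i \<le> rH i"
      "uL (ts ! i) / rL i + (uH (ts ! i) - uL (ts ! i)) / rH i \<le> 1"
      by (auto simp: mcf_valid_def Tall_def THI_def)
    ultimately have "CH (ts ! i) - CL (ts ! i) \<le> rH i * (per (ts ! i) - CL (ts ! i) / rL i)"
        "uH (ts ! i) \<le> rH i"
      by (auto simp: uL_def uH_def intro: fluid_HI_budget fluid_HI_rate_ge_util)
    then show ?thesis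
      using \<open>rL i \<le> rH i\<close> by (simp add: slackL_def)
  qed
  have "S4 ts ?a" "S5 ts ?a"
    using HI_task by (simp_all add: S4_def S5_def)
  moreover have "mr_domain ts ?a" "S1 ts ?a" "S2 ts m ?a" "S3 ts m ?a"
    using valid by (auto simp: mcf_valid_def mr_domain_def S1_def S2_def S3_def)
  ultimately show ?thesis by (simp add: mr_valid_def)
qed

lemma wf_task_scale:
  assumes "wf_task t" "1 \<le> s"
  shows "wf_task (t\<lparr>CL := CL t / s, CH := CH t / s\<rparr>)"
proof -
  from assms(1) have "0 < per t" "CH t \<le> per t"
    by (auto simp: wf_task_def uH_def divide_le_eq)
  moreover have "per t \<le> s * per t"
    using \<open>0 < per t\<close> assms(2) by simp
  ultimately have "CH t \<le> s * per t" by linarith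
  then show ?thesis
    using assms by (auto simp: wf_task_def uL_def uH_def divide_le_eq divide_right_mono)
qed

lemma wf_taskset_scale: "wf_taskset ts \<Longrightarrow> 1 \<le> s \<Longrightarrow> wf_taskset (scale s ts)"
  by (auto simp: wf_taskset_def scale_def wf_task_scale)

lemma speedup_bound_dominating:
  assumes "speedup_bound Feas P s" "1 \<le> s"
    and "\<And>ts m. wf_taskset ts \<Longrightarrow> P ts m \<Longrightarrow> Q ts m"
  shows "speedup_bound Feas Q s"
  using assms wf_taskset_scale unfolding speedup_bound_def by blast

theorem lemma3:
  fixes A :: mr_algorithm
    and MCF :: fluid_algorithm
    and Feas :: "taskset \<Rightarrow> nat \<Rightarrow> bool"
  assumes A_opt: "\<And>ts m. wf_taskset ts \<Longrightarrow>
                    (\<exists>a. dual_rate_form ts a \<and> mr_valid ts m a) \<Longrightarrow> mr_sched A ts m"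
    and MCF_speedup: "speedup_bound Feas (mcf_sched MCF) (4/3)"
  shows "(\<forall>ts m. wf_taskset ts \<longrightarrow> mcf_sched MCF ts m \<longrightarrow> mr_sched A ts m)
         \<and> speedup_bound Feas (mr_sched A) (4/3)"
proof -
  have dominates: "mr_sched A ts m" if "wf_taskset ts" "mcf_sched MCF ts m" for ts m
    using that A_opt dual_rate_form_dual_rate_assign mr_valid_dual_rate_assign
    unfolding mcf_sched_def by blast
  moreover have "speedup_bound Feas (mr_sched A) (4/3)"
    using speedup_bound_dominating[OF MCF_speedup] dominates by simp
  ultimately show ?thesis by blast
qed

end
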